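(* Let $n\ge1$ and $L,\underline b>0$. Let $\mathcal{F}_{L,\underline b}$ be the set of all $f\in C^1(\mathbb{R}^{2n},\mathbb{R}^n)$, $f=f(x,u)$ with $x,u\in\mathbb{R}^n$, such that $\left\|\frac{\partial f}{\partial x}\right\|\le L$ and $\mathrm{Sym}\left[\frac{\partial f}{\partial u}\right]\ge\underline b I_n$ for all $x,u\in\mathbb{R}^n$. Let $$\Omega_{pi}=\left\{(k_p,k_i)\in(0,\infty)^2\;:\; k_p^2\underline b>k_pL+k_i+L^2/(4\underline b)\right\}.$$ Consider the closed-loop system $\dot x=f(x,u)$, $u(t)=k_pe(t)+k_i\int_0^te(s)\,ds$, $e(t)=y^*-x(t)$, with setpoint $y^*\in\mathbb{R}^n$. Then: (1) If $(k_p,k_i)\in\Omega_{pi}$, then $\lim_{t\to\infty}x(t)=y^*$ for every $f\in\mathcal{F}_{L,\underline b}$, every $y^*\in\mathbb{R}^n$ and every initial state $x(0)\in\mathbb{R}^n$. (2) If $n=1$, let $\Omega'_{pi}=\{(k_p,k_i)\in\mathbb{R}^2: k_p\underline b>L,\ k_i>0\}$. If $(k_p,k_i)\in\Omega'_{pi}$, then $\lim_{t\to\infty}x(t)=y^*$ for every $f\in\mathcal{F}_{L,\underline b}$, every $y^*\in\mathbb{R}$ and every $x(0)\in\mathbb{R}$. Conversely, if $(k_p,k_i)\in\mathbb{R}^2$ is such that $\lim_{t\to\infty}x(t)=y^*$ for every $f\in\mathcal{F}_{L,\underline b}$, every $y^*\in\mathbb{R}$ and every $x(0)\in\mathbb{R}$,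 then $(k_p,k_i)\in\Omega'_{pi}$.
   Context: $\|\cdot\|$ denotes the Euclidean norm of vectors and the induced operator norm of matrices. For a square matrix $P$, $\mathrm{Sym}[P]=(P+P^{\mathsf T})/2$. For symmetric matrices, $S_1\ge S_2$ means $S_1-S_2$ is positive semidefinite. $\frac{\partial f}{\partial x},\frac{\partial f}{\partial u}$ are the $n\times n$ Jacobian matrices of $f$ with respect to $x$ and $u$; when $n=1$ the conditions read $|\partial f/\partial x|\le L$ and $\partial f/\partial u\ge\underline b$. *)

theory Defs
  imports "HOL-Analysis.Analysis"
begin

text \<open>A map f(x,u) of two vector arguments, viewed as a map on R^n x R^n = R^(2n).\<close>
definition uncurried :: "('a \<Rightarrow> 'b \<Rightarrow> 'c) \<Rightarrow> 'a \<times> 'b \<Rightarrow> 'c" where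
  "uncurried f = (\<lambda>p. f (fst p) (snd p))"

definition C1_map :: "('a::real_normed_vector \<Rightarrow> 'b::real_normed_vector) \<Rightarrow> bool" where
  "C1_map g \<longleftrightarrow> (\<exists>Dg. (\<forall>p. (g has_derivative blinfun_apply (Dg p)) (at p)) \<and> continuous_on UNIV Dg)"

definition jac_x :: "(real^'n \<Rightarrow> real^'n \<Rightarrow> real^'n) \<Rightarrow> real^'n \<Rightarrow> real^'n \<Rightarrow> real^'n^'n" where
  "jac_x f x u = matrix (\<lambda>v. frechet_derivative (uncurried f) (at (x, u)) (v, 0))"

definition jac_u :: "(real^'n \<Rightarrow> real^'n \<Rightarrow> real^'n) \<Rightarrow> real^'n \<Rightarrow> real^'n \<Rightarrow> real^'n^'n" where
  "jac_u f x u = matrix (\<lambda>w. frechet_derivative (uncurried f) (at (x, u)) (0, w))"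

definition op_norm :: "real^'n^'m \<Rightarrow> real" where
  "op_norm P = onorm (\<lambda>v. P *v v)"

definition Sym :: "real^'n^'n \<Rightarrow> real^'n^'n" where
  "Sym P = (1/2) *\<^sub>R (P + transpose P)"

definition psd :: "real^'n^'n \<Rightarrow> bool" where
  "psd S \<longleftrightarrow> (\<forall>v. 0 \<le> v \<bullet> (S *v v))"

definition loewner_ge :: "real^'n^'n \<Rightarrow> real^'n^'n \<Rightarrow> bool" where
  "loewner_ge S1 S2 \<longleftrightarrow> psd (S1 - S2)"

definition F_class :: "real \<Rightarrow> real \<Rightarrow> (real^'n \<Rightarrow> real^'n \<Rightarrow> real^'n) set" where
  "F_class L b = {f. C1_map (uncurried f) \<and>
     (\<forall>x u. op_norm (jac_x f x u) \<le> L \<and> loewner_ge (Sym (jac_u f x u)) (b *\<^sub>R mat 1))}"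

definition Omega_pi :: "real \<Rightarrow> real \<Rightarrow> (real \<times> real) set" where
  "Omega_pi L b = {(kp, ki). kp > 0 \<and> ki > 0 \<and> kp^2 * b > kp * L + ki + L^2 / (4 * b)}"

definition Omega_pi' :: "real \<Rightarrow> real \<Rightarrow> (real \<times> real) set" where
  "Omega_pi' L b = {(kp, ki). kp * b > L \<and> ki > 0}"

definition PI_solution ::
  "(real^'n \<Rightarrow> real^'n \<Rightarrow> real^'n) \<Rightarrow> real \<Rightarrow> real \<Rightarrow> real^'n \<Rightarrow> (real \<Rightarrow> real^'n) \<Rightarrow> bool" where
  "PI_solution f kp ki y x \<longleftrightarrow>
     (\<forall>t\<ge>0. (x has_vector_derivative
        f (x t) (kp *\<^sub>R (y - x t) + ki *\<^sub>R integral {0..t} (\<lambda>s. y - x s))) (at t within {0..}))"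

end

theory Submission
  imports Defs
begin

text \<open>
  Part (1). Compare the closed loop with its own time shift by \<open>\<tau> \<in> [0, 1]\<close>: the increments
  \<open>E\<close> of the error and \<open>U\<close> of the control satisfy \<open>E' = - \<Delta>\<close>, \<open>U' = ki E - kp \<Delta>\<close>, where strong
  monotonicity in \<open>u\<close> and the Lipschitz bound in \<open>x\<close> give
  \<open>U \<bullet> \<Delta> \<ge> b \<bar>U\<bar>\<^sup>2 - L \<bar>U\<bar> \<bar>E\<bar>\<close>. For a weight \<open>0 < h < kp\<close> chosen from the gain condition,
  \<open>\<bar>U - (kp - h) E\<bar>\<^sup>2 + (kp - h) h \<bar>E\<bar>\<^sup>2\<close> decays exponentially, uniformly in \<open>\<tau>\<close>. So \<open>e\<close> and
  \<open>u\<close> are asymptotically constant on unit intervals, and since \<open>ki\<close> times the mean of \<open>e\<close> over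
  \<open>[t, t + 1]\<close> is an increment of \<open>u - kp e\<close>, the error tends to \<open>0\<close>.

  Part (2), \<open>n = 1\<close>. Shifting to the equilibrium control, the loop becomes a planar system for the
  error and the integral state \<open>w\<close>; with \<open>P\<close> a primitive of the plant at zero error,
  \<open>P(w) / ki + e\<^sup>2 / 2\<close> dissipates at rate \<open>(kp b - L) e\<^sup>2\<close>. It keeps the trajectory bounded, so
  \<open>e\<close> is Lipschitz, and a Barbalat-type argument gives \<open>e \<rightarrow> 0\<close>.

  Converse. Outside \<open>\<Omega>'\<close> an affine plant defeats the controller: a constant offset when
  \<open>ki = 0\<close>, an exponentially growing solution when \<open>ki < 0\<close> or \<open>kp < 0\<close>, and an undamped
  oscillation when \<open>b kp \<le> L\<close>.
\<close>

section \<open>Plants of the class \<open>F_class L b\<close>\<close>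

lemma quadratic_form_Sym: "(v::real^'n) \<bullet> (Sym A *v v) = v \<bullet> (A *v v)"
  unfolding Sym_def
  by (simp add: scaleR_matrix_vector_assoc[symmetric] matrix_vector_mult_add_rdistrib
      inner_add_right dot_lmul_matrix inner_commute[of v "v v* A"])

lemma loewner_ge_Sym_scaled_id_iff:
  "loewner_ge (Sym A) (b *\<^sub>R mat 1) \<longleftrightarrow> (\<forall>v::real^'n. b * norm v ^ 2 \<le> v \<bullet> (A *v v))"
proof -
  have "v \<bullet> ((Sym A - b *\<^sub>R mat 1) *v v) = v \<bullet> (A *v v) - b * norm v ^ 2" for v
    by (simp add: matrix_vector_mult_diff_rdistrib inner_diff_right quadratic_form_Sym
        scaleR_matrix_vector_assoc[symmetric] power2_norm_eq_inner)
  then show ?thesis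
    unfolding loewner_ge_def psd_def by auto
qed

lemma op_norm_matrix: "bounded_linear g \<Longrightarrow> op_norm (matrix g) = onorm g"
  unfolding op_norm_def by (simp add: bounded_linear.linear matrix_works)

lemma F_class_derivative:
  fixes f :: "real^'n \<Rightarrow> real^'n \<Rightarrow> real^'n"
  assumes "f \<in> F_class L b"
  obtains D where "\<And>p. (uncurried f has_derivative D p) (at p)"
    and "\<And>x u. onorm (\<lambda>v. D (x, u) (v, 0)) \<le> L"
    and "\<And>x u w. b * norm w ^ 2 \<le> w \<bullet> D (x, u) (0, w)"
proof -
  obtain Dg where D: "\<And>p. (uncurried f has_derivative blinfun_apply (Dg p)) (at p)"
    and J: "\<And>x u. op_norm (jac_x f x u) \<le> L \<and> loewner_ge (Sym (jac_u f x u)) (b *\<^sub>R mat 1)"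
    using assms unfolding F_class_def C1_map_def by blast
  have fd: "frechet_derivative (uncurried f) (at p) = blinfun_apply (Dg p)" for p
    using D frechet_derivative_at by metis
  have lin_x: "bounded_linear (\<lambda>v. blinfun_apply (Dg (x, u)) (v, 0))"
    and lin_u: "bounded_linear (\<lambda>w. blinfun_apply (Dg (x, u)) (0, w))" for x u
    by (auto intro!: bounded_linear_compose[OF blinfun.bounded_linear_right] bounded_linear_Pair
        bounded_linear_zero bounded_linear_ident)
  have bound: "onorm (\<lambda>v. blinfun_apply (Dg (x, u)) (v, 0)) \<le> L" for x u
    using J[of x u] op_norm_matrix[OF lin_x] unfolding jac_x_def fd by simp
  have mono: "b * norm w ^ 2 \<le> w \<bullet> blinfun_apply (Dg (x, u)) (0, w)" for x u w
    using J[of x u] fun_cong[OF matrix_vector_mul(3)[OF lin_u]]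
    unfolding jac_u_def fd loewner_ge_Sym_scaled_id_iff by simp
  show thesis
    by (rule that[OF D bound mono])
qed

lemma F_class_continuous:
  fixes f :: "real^'n \<Rightarrow> real^'n \<Rightarrow> real^'n"
  assumes "f \<in> F_class L b"
  shows "continuous_on UNIV (uncurried f)"
  using F_class_derivative[OF assms] has_derivative_continuous continuous_at_imp_continuous_on
  by metis

lemma F_class_strongly_monotone:
  fixes f :: "real^'n \<Rightarrow> real^'n \<Rightarrow> real^'n"
  assumes "f \<in> F_class L b"
  shows "b * norm (u1 - u2) ^ 2 \<le> (u1 - u2) \<bullet> (f x u1 - f x u2)"
proof -
  obtain D where D: "\<And>p. (uncurried f has_derivative D p) (at p)"
    and mono: "\<And>x u w. b * norm w ^ 2 \<le> w \<bullet> D (x, u) (0, w)"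
    using F_class_derivative[OF assms] by metis
  define w where "w = u1 - u2"
  define h where "h = (\<lambda>s. w \<bullet> uncurried f (x, u2 + s *\<^sub>R w))"
  have "(h has_derivative (\<lambda>ds. w \<bullet> D (x, u2 + s *\<^sub>R w) (0, ds *\<^sub>R w))) (at s within {0..1})" for s
  proof -
    have "((\<lambda>s. (x, u2 + s *\<^sub>R w)) has_derivative (\<lambda>ds. (0, ds *\<^sub>R w))) (at s within {0..1})"
      by (auto intro!: derivative_eq_intros)
    from has_derivative_compose[OF this D[THEN has_derivative_at_withinI]]
    show ?thesis
      unfolding h_def o_def by (rule has_derivative_inner_right)
  qed
  then obtain s where "h 1 - h 0 = w \<bullet> D (x, u2 + s *\<^sub>R w) (0, w)"
    using mvt_very_simple[of 0 1 h] by force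
  moreover have "h 1 - h 0 = w \<bullet> (f x u1 - f x u2)"
    unfolding h_def uncurried_def w_def by (simp add: inner_diff_right)
  ultimately show ?thesis
    using mono[of w x "u2 + s *\<^sub>R w"] unfolding w_def by simp
qed

lemma F_class_lipschitz:
  fixes f :: "real^'n \<Rightarrow> real^'n \<Rightarrow> real^'n"
  assumes "f \<in> F_class L b"
  shows "norm (f x1 u - f x2 u) \<le> L * norm (x1 - x2)"
proof -
  obtain D where D: "\<And>p. (uncurried f has_derivative D p) (at p)"
    and bound: "\<And>x u. onorm (\<lambda>v. D (x, u) (v, 0)) \<le> L"
    using F_class_derivative[OF assms] by metis
  have "((\<lambda>x. f x u) has_derivative (\<lambda>v. D (x, u) (v, 0))) (at x within UNIV)" for x
  proof -
    have "((\<lambda>x. (x, u)) has_derivative (\<lambda>v. (v, 0))) (at x)"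
      by (auto intro!: derivative_eq_intros)
    from has_derivative_compose[OF this D] show ?thesis
      by (simp add: o_def uncurried_def)
  qed
  from differentiable_bound[OF convex_UNIV this bound] show ?thesis
    by simp
qed

lemma F_class_incremental_monotone:
  fixes f :: "real^'n \<Rightarrow> real^'n \<Rightarrow> real^'n"
  assumes "f \<in> F_class L b"
  shows "b * norm (u1 - u2)^2 - L * norm (u1 - u2) * norm (x1 - x2)
    \<le> (u1 - u2) \<bullet> (f x1 u1 - f x2 u2)"
proof -
  have "(u1 - u2) \<bullet> (f x1 u2 - f x2 u2) \<ge> - (norm (u1 - u2) * norm (f x1 u2 - f x2 u2))"
    using Cauchy_Schwarz_ineq2[of "u1 - u2" "f x1 u2 - f x2 u2"] by linarith
  moreover have "norm (u1 - u2) * norm (f x1 u2 - f x2 u2) \<le> norm (u1 - u2) * (L * norm (x1 - x2))"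
    using F_class_lipschitz[OF assms] by (simp add: mult_left_mono)
  moreover have "f x1 u1 - f x2 u2 = (f x1 u1 - f x1 u2) + (f x1 u2 - f x2 u2)"
    by simp
  ultimately show ?thesis
    using F_class_strongly_monotone[OF assms, of u1 u2 x1] unfolding inner_add_right
    by (simp only:) (simp add: algebra_simps)
qed

lemma affine_in_F_class:
  fixes a B :: real and d :: "real^'n"
  assumes "\<bar>a\<bar> \<le> L" and "b \<le> B"
  shows "(\<lambda>x u. a *\<^sub>R x + B *\<^sub>R u + d) \<in> F_class L b"
proof -
  define f where "f = (\<lambda>(x::real^'n) (u::real^'n). a *\<^sub>R x + B *\<^sub>R u + d)"
  define l where "l = (\<lambda>q::(real^'n) \<times> (real^'n). a *\<^sub>R fst q + B *\<^sub>R snd q)"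
  have bl: "bounded_linear l"
    unfolding l_def by (intro bounded_linear_intros)
  have D: "(uncurried f has_derivative l) (at p)" for p
    unfolding f_def uncurried_def l_def
    by (auto intro!: derivative_eq_intros simp: case_prod_beta)
  then have fd: "frechet_derivative (uncurried f) (at p) = l" for p
    by (rule frechet_derivative_at[symmetric])
  have "C1_map (uncurried f)"
    unfolding C1_map_def using D bounded_linear_Blinfun_apply[OF bl]
    by (intro exI[of _ "\<lambda>p. Blinfun l"]) simp
  moreover have "op_norm (jac_x f x u) \<le> L" for x u
  proof -
    have "op_norm (jac_x f x u) = op_norm (matrix (\<lambda>v::real^'n. a *\<^sub>R v))"
      unfolding jac_x_def fd l_def by simp
    also have "\<dots> = onorm (\<lambda>v::real^'n. a *\<^sub>R v)"
      by (rule op_norm_matrix[OF bounded_linear_scaleR_right])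
    also have "\<dots> = \<bar>a\<bar> * onorm (\<lambda>v::real^'n. v)"
      by (rule onorm_scaleR[OF bounded_linear_ident])
    finally have "op_norm (jac_x f x u) = \<bar>a\<bar>"
      by (simp add: onorm_id)
    then show ?thesis
      using assms(1) by simp
  qed
  moreover have "loewner_ge (Sym (jac_u f x u)) (b *\<^sub>R mat 1)" for x u
  proof -
    have "jac_u f x u *v v = B *\<^sub>R v" for v
      unfolding jac_u_def fd l_def
      using fun_cong[OF matrix_vector_mul(3)[OF bounded_linear_scaleR_right]] by simp
    then show ?thesis
      unfolding loewner_ge_Sym_scaled_id_iff
      using assms(2) by (auto simp: power2_norm_eq_inner intro: mult_right_mono)
  qed
  ultimately show ?thesis
    unfolding F_class_def f_def by blast
qed

section \<open>Convergence for gains in \<open>Omega_pi\<close>\<close>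

lemma PI_solution_closed_loop:
  fixes f :: "real^'n \<Rightarrow> real^'n \<Rightarrow> real^'n"
  assumes "PI_solution f kp ki y x"
    and e: "e = (\<lambda>t. y - x t)"
    and u: "u = (\<lambda>t. kp *\<^sub>R e t + ki *\<^sub>R integral {0..t} e)"
  shows "\<And>T. continuous_on {0..T} e" and "\<And>T. continuous_on {0..T} (\<lambda>t. integral {0..t} e)"
    and "\<And>T. continuous_on {0..T} u"
    and "\<And>t. 0 < t \<Longrightarrow> (e has_vector_derivative - f (x t) (u t)) (at t)"
    and "\<And>t. 0 < t \<Longrightarrow> ((\<lambda>t. integral {0..t} e) has_vector_derivative e t) (at t)"
    and "\<And>t. 0 < t \<Longrightarrow> (u has_vector_derivative ki *\<^sub>R e t - kp *\<^sub>R f (x t) (u t)) (at t)"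
proof -
  have dx: "(x has_vector_derivative f (x t) (u t)) (at t within {0..})" if "0 \<le> t" for t
    using assms(1) that unfolding PI_solution_def u e by blast
  have "continuous_on {0..T} x" for T
    unfolding continuous_on_eq_continuous_within
    by (metis dx has_vector_derivative_continuous continuous_within_subset atLeastAtMost_iff
        atLeast_iff subsetI)
  then show ce: "continuous_on {0..T} e" for T
    unfolding e by (intro continuous_intros)
  have dZ: "((\<lambda>t. integral {0..t} e) has_vector_derivative e t) (at t within {0..T})"
    if "t \<in> {0..T}" for t T
    by (rule integral_has_vector_derivative[OF ce that])
  then show cZ: "continuous_on {0..T} (\<lambda>t. integral {0..t} e)" for T
    unfolding continuous_on_eq_continuous_within using has_vector_derivative_continuous by blast
  show "continuous_on {0..T} u" for T
    unfolding u by (intro continuous_intros ce cZ)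
  show de: "(e has_vector_derivative - f (x t) (u t)) (at t)" if "0 < t" for t
    using dx[of t] that at_within_interior[of t "{0..}"]
    unfolding e by (auto intro!: derivative_eq_intros)
  show dZ': "((\<lambda>t. integral {0..t} e) has_vector_derivative e t) (at t)" if "0 < t" for t
    using dZ[of t "t + 1"] that at_within_interior[of t "{0..t + 1}"] by simp
  show "(u has_vector_derivative ki *\<^sub>R e t - kp *\<^sub>R f (x t) (u t)) (at t)" if "0 < t" for t
    using de[OF that] dZ'[OF that] unfolding u
    by (auto intro!: derivative_eq_intros simp: algebra_simps)
qed

lemma DERIV_bound_imp_diff_le:
  fixes F :: "real \<Rightarrow> real"
  assumes "a \<le> b" and "continuous_on {a..b} F"
    and "\<And>t. a < t \<Longrightarrow> t < b \<Longrightarrow> (F has_real_derivative F' t) (at t)"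
    and "\<And>t. a < t \<Longrightarrow> t < b \<Longrightarrow> F' t \<le> k"
  shows "F b - F a \<le> k * (b - a)"
proof -
  have "(\<lambda>t. F t - k * t) b \<le> (\<lambda>t. F t - k * t) a"
  proof (rule DERIV_nonpos_imp_decreasing_open[OF assms(1)])
    fix t assume "a < t" "t < b"
    then show "\<exists>y. ((\<lambda>t. F t - k * t) has_real_derivative y) (at t) \<and> y \<le> 0"
      using assms(4)[of t]
      by (intro exI[of _ "F' t - k"] conjI) (auto intro!: derivative_eq_intros assms(3))
  qed (intro continuous_intros assms(2))
  then show ?thesis
    by (simp add: algebra_simps)
qed

lemma exp_decay_of_DERIV_le:
  fixes W :: "real \<Rightarrow> real"
  assumes "0 \<le> t" and "continuous_on {0..t} W"
    and "\<And>s. 0 < s \<Longrightarrow> s < t \<Longrightarrow> (W has_real_derivative W' s) (at s)"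
    and "\<And>s. 0 < s \<Longrightarrow> s < t \<Longrightarrow> W' s \<le> - \<delta> * W s"
  shows "W t \<le> W 0 * exp (- \<delta> * t)"
proof -
  have "exp (\<delta> * t) * W t - exp (\<delta> * 0) * W 0 \<le> 0 * (t - 0)"
  proof (rule DERIV_bound_imp_diff_le[OF assms(1)])
    fix s assume s: "0 < s" "s < t"
    show "((\<lambda>s. exp (\<delta> * s) * W s) has_real_derivative
        exp (\<delta> * s) * (\<delta> * W s + W' s)) (at s)"
      using assms(3)[OF s] by (auto intro!: derivative_eq_intros simp: algebra_simps)
    show "exp (\<delta> * s) * (\<delta> * W s + W' s) \<le> 0"
      using assms(4)[OF s] by (simp add: mult_nonneg_nonpos)
  qed (intro continuous_intros assms(2))
  then show ?thesis
    by (simp add: exp_minus field_simps)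
qed

lemma neg_def_quadratic_bound:
  fixes A B C s r :: real
  assumes "0 < A" and "0 < C" and "B^2 < A * C"
  shows "- A * s^2 + 2 * B * s * r - C * r^2 \<le> - ((A * C - B^2) / (A + C)) * (s^2 + r^2)"
proof -
  define \<epsilon> where "\<epsilon> = (A * C - B^2) / (A + C)"
  have \<epsilon>: "\<epsilon> * (A + C) = A * C - B^2"
    unfolding \<epsilon>_def using assms by simp
  then have "(A - \<epsilon>) * (A + C) = A^2 + B^2"
    by (simp add: algebra_simps power2_eq_square)
  then have A\<epsilon>: "0 < A - \<epsilon>"
    using assms by (smt (verit) zero_less_mult_iff zero_le_power2 power2_less_0 zero_less_power2)
  have "(A - \<epsilon>) * (C - \<epsilon>) = B^2 + \<epsilon>^2"
    using \<epsilon> by (simp add: algebra_simps power2_eq_square)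
  then have det: "B^2 \<le> (A - \<epsilon>) * (C - \<epsilon>)"
    by simp
  have "(A - \<epsilon>) * ((A - \<epsilon>) * s^2 - 2 * B * s * r + (C - \<epsilon>) * r^2)
      = ((A - \<epsilon>) * s - B * r)^2 + ((A - \<epsilon>) * (C - \<epsilon>) - B^2) * r^2"
    by (simp add: algebra_simps power2_eq_square)
  also have "\<dots> \<ge> 0"
    using det by simp
  finally have "0 \<le> (A - \<epsilon>) * s^2 - 2 * B * s * r + (C - \<epsilon>) * r^2"
    using A\<epsilon> by (simp add: zero_le_mult_iff)
  then show ?thesis
    unfolding \<epsilon>_def[symmetric] by (simp add: algebra_simps)
qed

lemma Omega_pi_weight:
  assumes "0 < L" and "0 < b" and "(kp, ki) \<in> Omega_pi L b"
  obtains h where "0 < h" and "h < kp" and "(h * L + ki)^2 < 4 * h * b * (kp - h) * ki"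
proof -
  have kp: "0 < kp" and ki: "0 < ki" and "kp * L + ki + L^2 / (4 * b) < kp^2 * b"
    using assms(3) by (auto simp: Omega_pi_def)
  moreover have "0 < L^2 / (4 * b)"
    using assms by simp
  ultimately have P: "0 < b * kp^2 - kp * L - ki"
    by (simp add: algebra_simps)
  have "L < b * kp"
  proof (rule ccontr)
    assume "\<not> L < b * kp"
    then have "b * kp * kp \<le> L * kp"
      using kp by (simp add: mult_right_mono)
    then show False
      using P ki by (simp add: power2_eq_square algebra_simps)
  qed
  \<comment> \<open>The margin \<open>4 h b (kp - h) ki - (h L + ki)\<^sup>2\<close> is a concave quadratic in \<open>h\<close>;
    we take its maximiser, where the margin equals \<open>4 b ki\<^sup>2 (b kp\<^sup>2 - kp L - ki) / D\<close>.\<close>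
  define D where "D = 4 * b * ki + L^2"
  define h where "h = ki * (2 * b * kp - L) / D"
  have D: "0 < D"
    unfolding D_def using assms ki by (simp add: add_pos_pos)
  have hD: "h * D = ki * (2 * b * kp - L)"
    unfolding h_def using D by simp
  show thesis
  proof (rule that)
    have "0 < b * kp"
      using assms(2) kp by simp
    then have "0 < 2 * b * kp - L"
      using \<open>L < b * kp\<close> by linarith
    then show "0 < h"
      unfolding h_def using D ki by simp
    have "ki * (2 * b * kp - L) < kp * D"
      using assms kp ki unfolding D_def by (simp add: algebra_simps add_pos_pos)
    then show "h < kp"
      unfolding h_def using D by (simp add: pos_divide_less_eq)
    have "D * (4 * h * b * (kp - h) * ki - (h * L + ki)^2)
        = 2 * (h * D) * ki * (2 * b * kp - L) - (h * D)^2 - ki^2 * D"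
      unfolding D_def by (simp add: algebra_simps power2_eq_square)
    also have "\<dots> = 4 * b * ki^2 * (b * kp^2 - kp * L - ki)"
      unfolding hD by (simp add: D_def algebra_simps power2_eq_square)
    finally have "0 < D * (4 * h * b * (kp - h) * ki - (h * L + ki)^2)"
      using P assms(2) ki by simp
    then show "(h * L + ki)^2 < 4 * h * b * (kp - h) * ki"
      using D by (simp add: zero_less_mult_iff)
  qed
qed

definition PI_lyapunov :: "real \<Rightarrow> real \<Rightarrow> 'a::real_normed_vector \<Rightarrow> 'a \<Rightarrow> real" where
  "PI_lyapunov g c E U = (norm (U - g *\<^sub>R E)^2 + c * norm E^2) / 2"

lemma norm_add_power2_le: "norm (a + b)^2 \<le> 2 * norm a^2 + 2 * norm (b::'a::real_normed_vector)^2"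
proof -
  have "norm (a + b)^2 \<le> (norm a + norm b)^2"
    by (simp add: norm_triangle_ineq power_mono)
  also have "\<dots> \<le> 2 * norm a^2 + 2 * norm b^2"
    using sum_squares_bound[of "norm a" "norm b"] by (simp add: power2_eq_square algebra_simps)
  finally show ?thesis .
qed

lemma PI_lyapunov_bounds:
  assumes "0 < c"
  shows "PI_lyapunov g c E U \<le> (1 + g^2 + c) * (norm E^2 + norm U^2)"
    and "norm E^2 + norm U^2 \<le> (4 + (4 * g^2 + 2) / c) * PI_lyapunov g c E U"
proof -
  have V: "norm (U - g *\<^sub>R E)^2 \<le> 2 * norm U^2 + 2 * g^2 * norm E^2"
    using norm_add_power2_le[of U "- g *\<^sub>R E"] by (simp add: power_mult_distrib)
  have U: "norm U^2 \<le> 2 * norm (U - g *\<^sub>R E)^2 + 2 * g^2 * norm E^2"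
    using norm_add_power2_le[of "U - g *\<^sub>R E" "g *\<^sub>R E"] by (simp add: power_mult_distrib)
  have "2 * PI_lyapunov g c E U \<le> 2 * norm U^2 + 2 * g^2 * norm E^2 + c * norm E^2"
    using V unfolding PI_lyapunov_def by simp
  moreover have "(1 + g^2 + c) * (norm E^2 + norm U^2)
      = norm E^2 + norm U^2 + g^2 * norm E^2 + g^2 * norm U^2 + c * norm E^2 + c * norm U^2"
    by (simp add: algebra_simps)
  moreover have "0 \<le> g^2 * norm U^2" "0 \<le> c * norm U^2" "0 \<le> c * norm E^2" "0 \<le> norm E^2"
    using assms by simp_all
  ultimately show "PI_lyapunov g c E U \<le> (1 + g^2 + c) * (norm E^2 + norm U^2)"
    by linarith
  have "c * norm E^2 \<le> 2 * PI_lyapunov g c E U"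
    unfolding PI_lyapunov_def by simp
  then have E: "(2 * g^2 + 1) * norm E^2 \<le> (2 * g^2 + 1) * (2 * PI_lyapunov g c E U / c)"
    using assms by (intro mult_left_mono) (simp_all add: field_simps)
  have "norm E^2 + norm U^2 \<le> 2 * norm (U - g *\<^sub>R E)^2 + (2 * g^2 + 1) * norm E^2"
    using U by (simp add: algebra_simps)
  also have "\<dots> \<le> 4 * PI_lyapunov g c E U + (2 * g^2 + 1) * (2 * PI_lyapunov g c E U / c)"
  proof -
    have "2 * norm (U - g *\<^sub>R E)^2 \<le> 4 * PI_lyapunov g c E U"
      using assms unfolding PI_lyapunov_def by simp
    then show ?thesis
      using E by linarith
  qed
  also have "\<dots> = (4 + (4 * g^2 + 2) / c) * PI_lyapunov g c E U"
    using assms by (simp add: field_simps)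
  finally show "norm E^2 + norm U^2 \<le> (4 + (4 * g^2 + 2) / c) * PI_lyapunov g c E U" .
qed

lemma PI_lyapunov_DERIV:
  fixes E U :: "real \<Rightarrow> 'a::real_inner"
  assumes "(E has_vector_derivative - \<Delta>) (at t)"
    and "(U has_vector_derivative ki *\<^sub>R E t - kp *\<^sub>R \<Delta>) (at t)"
  shows "((\<lambda>t. PI_lyapunov (kp - h) ((kp - h) * h) (E t) (U t)) has_real_derivative
      - h * (U t \<bullet> \<Delta>) + ki * (U t \<bullet> E t) - (kp - h) * ki * (E t \<bullet> E t)) (at t)"
proof -
  have dE: "(E has_derivative (\<lambda>d. d *\<^sub>R - \<Delta>)) (at t)"
    and dU: "(U has_derivative (\<lambda>d. d *\<^sub>R (ki *\<^sub>R E t - kp *\<^sub>R \<Delta>))) (at t)"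
    using assms by (simp_all add: has_vector_derivative_def)
  have "((\<lambda>t. ((U t - (kp - h) *\<^sub>R E t) \<bullet> (U t - (kp - h) *\<^sub>R E t)
        + (kp - h) * h * (E t \<bullet> E t)) / 2) has_real_derivative
      - h * (U t \<bullet> \<Delta>) + ki * (U t \<bullet> E t) - (kp - h) * ki * (E t \<bullet> E t)) (at t)"
    unfolding has_field_derivative_def
    by (rule has_derivative_eq_rhs, (rule derivative_intros dE dU)+, simp, rule ext)
      (simp add: inner_add_left inner_add_right inner_diff_left inner_diff_right
        inner_commute field_simps)
  then show ?thesis
    unfolding PI_lyapunov_def power2_norm_eq_inner .
qed

lemma PI_lyapunov_dissipation:
  assumes "0 < b" and "0 < ki" and "0 < h" and "h < kp"
    and "(h * L + ki)^2 < 4 * h * b * (kp - h) * ki"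
  obtains \<delta> where "0 < \<delta>"
    and "\<And>E U \<Delta> :: 'a::real_inner. b * norm U^2 - L * norm U * norm E \<le> U \<bullet> \<Delta> \<Longrightarrow>
      - h * (U \<bullet> \<Delta>) + ki * (U \<bullet> E) - (kp - h) * ki * (E \<bullet> E)
        \<le> - \<delta> * PI_lyapunov (kp - h) ((kp - h) * h) E U"
proof -
  define A where "A = h * b"
  define B where "B = (h * L + ki) / 2"
  define C where "C = (kp - h) * ki"
  define K where "K = 1 + (kp - h)^2 + (kp - h) * h"
  have A: "0 < A" and C: "0 < C" and AC: "B^2 < A * C"
    using assms by (auto simp: A_def B_def C_def power_divide algebra_simps)
  have K: "0 < K"
    unfolding K_def using assms by (simp add: add_pos_nonneg)
  define \<epsilon> where "\<epsilon> = (A * C - B^2) / (A + C)"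
  have \<epsilon>: "0 < \<epsilon>"
    unfolding \<epsilon>_def using A C AC by simp
  show thesis
  proof (rule that[of "\<epsilon> / K"])
    show "0 < \<epsilon> / K"
      using \<epsilon> K by simp
    fix E U \<Delta> :: 'a
    assume mono: "b * norm U^2 - L * norm U * norm E \<le> U \<bullet> \<Delta>"
    have "- h * (U \<bullet> \<Delta>) \<le> - h * (b * norm U^2 - L * norm U * norm E)"
      using mult_left_mono[OF mono, of h] assms(3) by simp
    moreover have "ki * (U \<bullet> E) \<le> ki * (norm U * norm E)"
      using norm_cauchy_schwarz[of U E] assms(2) by (simp add: mult_left_mono)
    moreover have "(kp - h) * ki * (E \<bullet> E) = C * norm E^2"
      unfolding C_def by (simp add: power2_norm_eq_inner)
    ultimately have "- h * (U \<bullet> \<Delta>) + ki * (U \<bullet> E) - (kp - h) * ki * (E \<bullet> E)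
        \<le> - h * (b * norm U^2 - L * norm U * norm E) + ki * (norm U * norm E) - C * norm E^2"
      by linarith
    also have "\<dots> = - A * norm U^2 + 2 * B * norm U * norm E - C * norm E^2"
      unfolding A_def B_def by (simp add: algebra_simps)
    also have "\<dots> \<le> - \<epsilon> * (norm U^2 + norm E^2)"
      unfolding \<epsilon>_def by (rule neg_def_quadratic_bound[OF A C AC])
    also have "\<dots> \<le> - (\<epsilon> / K) * PI_lyapunov (kp - h) ((kp - h) * h) E U"
    proof -
      have "PI_lyapunov (kp - h) ((kp - h) * h) E U \<le> K * (norm U^2 + norm E^2)"
        using PI_lyapunov_bounds(1)[where g="kp - h" and c="(kp - h) * h" and E=E and U=U] assms
        unfolding K_def by (simp add: add.commute)
      then have "(\<epsilon> / K) * PI_lyapunov (kp - h) ((kp - h) * h) E U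
          \<le> (\<epsilon> / K) * (K * (norm U^2 + norm E^2))"
        using \<epsilon> K by (intro mult_left_mono) simp_all
      then show ?thesis
        using K by simp
    qed
    finally show "- h * (U \<bullet> \<Delta>) + ki * (U \<bullet> E) - (kp - h) * ki * (E \<bullet> E)
        \<le> - (\<epsilon> / K) * PI_lyapunov (kp - h) ((kp - h) * h) E U" .
  qed
qed

lemma incremental_exponential_decay:
  assumes "0 < L" and "0 < b" and "(kp, ki) \<in> Omega_pi L b"
  obtains \<delta> K :: real where "0 < \<delta>"
    and "\<And>(E :: real \<Rightarrow> 'a::real_inner) U \<Delta> t. 0 \<le> t \<Longrightarrow>
      continuous_on {0..t} E \<Longrightarrow> continuous_on {0..t} U \<Longrightarrow>
      (\<And>s. 0 < s \<Longrightarrow> (E has_vector_derivative - \<Delta> s) (at s)) \<Longrightarrow>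
      (\<And>s. 0 < s \<Longrightarrow> (U has_vector_derivative ki *\<^sub>R E s - kp *\<^sub>R \<Delta> s) (at s)) \<Longrightarrow>
      (\<And>s. 0 < s \<Longrightarrow> b * norm (U s)^2 - L * norm (U s) * norm (E s) \<le> U s \<bullet> \<Delta> s) \<Longrightarrow>
      norm (E t)^2 + norm (U t)^2 \<le> K * (norm (E 0)^2 + norm (U 0)^2) * exp (- \<delta> * t)"
proof -
  have ki: "0 < ki"
    using assms(3) by (simp add: Omega_pi_def)
  obtain h where h: "0 < h" "h < kp" "(h * L + ki)^2 < 4 * h * b * (kp - h) * ki"
    using Omega_pi_weight[OF assms] by blast
  obtain \<delta> where \<delta>: "0 < \<delta>"
    and dissipation: "\<And>E U \<Delta> :: 'a. b * norm U^2 - L * norm U * norm E \<le> U \<bullet> \<Delta> \<Longrightarrow>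
      - h * (U \<bullet> \<Delta>) + ki * (U \<bullet> E) - (kp - h) * ki * (E \<bullet> E)
        \<le> - \<delta> * PI_lyapunov (kp - h) ((kp - h) * h) E U"
    using PI_lyapunov_dissipation[OF assms(2) ki h] by blast
  define g where "g = kp - h"
  define c where "c = g * h"
  have c: "0 < c"
    unfolding c_def g_def using h by simp
  define K1 where "K1 = 1 + g^2 + c"
  define K2 where "K2 = 4 + (4 * g^2 + 2) / c"
  have K2: "0 \<le> K2"
    unfolding K2_def using c by simp
  show thesis
  proof (rule that[OF \<delta>])
    fix E U \<Delta> :: "real \<Rightarrow> 'a" and t :: real
    assume t: "0 \<le> t" and cE: "continuous_on {0..t} E" and cU: "continuous_on {0..t} U"
      and dE: "\<And>s. 0 < s \<Longrightarrow> (E has_vector_derivative - \<Delta> s) (at s)"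
      and dU: "\<And>s. 0 < s \<Longrightarrow> (U has_vector_derivative ki *\<^sub>R E s - kp *\<^sub>R \<Delta> s) (at s)"
      and mono: "\<And>s. 0 < s \<Longrightarrow> b * norm (U s)^2 - L * norm (U s) * norm (E s) \<le> U s \<bullet> \<Delta> s"
    define W where "W = (\<lambda>s. PI_lyapunov g c (E s) (U s))"
    have "W t \<le> W 0 * exp (- \<delta> * t)"
    proof (rule exp_decay_of_DERIV_le[OF t])
      show "continuous_on {0..t} W"
        unfolding W_def PI_lyapunov_def by (intro continuous_intros cE cU) auto
      fix s assume "0 < s" "s < t"
      show "(W has_real_derivative
          - h * (U s \<bullet> \<Delta> s) + ki * (U s \<bullet> E s) - g * ki * (E s \<bullet> E s)) (at s)"
        unfolding W_def g_def c_def by (rule PI_lyapunov_DERIV[OF dE dU]) (use \<open>0 < s\<close> in auto)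
      show "- h * (U s \<bullet> \<Delta> s) + ki * (U s \<bullet> E s) - g * ki * (E s \<bullet> E s) \<le> - \<delta> * W s"
        unfolding W_def g_def c_def by (rule dissipation[OF mono]) (use \<open>0 < s\<close> in auto)
    qed
    then have "norm (E t)^2 + norm (U t)^2 \<le> K2 * (W 0 * exp (- \<delta> * t))"
      using PI_lyapunov_bounds(2)[OF c, where g=g and E="E t" and U="U t"] K2 unfolding W_def K2_def
      by (smt (verit) mult_left_mono)
    also have "\<dots> \<le> K2 * (K1 * (norm (E 0)^2 + norm (U 0)^2) * exp (- \<delta> * t))"
      using PI_lyapunov_bounds(1)[OF c, where g=g and E="E 0" and U="U 0"] K2
      unfolding W_def K1_def by (intro mult_left_mono mult_right_mono) auto
    finally show "norm (E t)^2 + norm (U t)^2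
        \<le> (K2 * K1) * (norm (E 0)^2 + norm (U 0)^2) * exp (- \<delta> * t)"
      by (simp add: mult.assoc)
  qed
qed

lemma PI_solution_shift_decay:
  fixes f :: "real^'n \<Rightarrow> real^'n \<Rightarrow> real^'n"
  assumes "0 < L" and "0 < b" and "(kp, ki) \<in> Omega_pi L b" and "f \<in> F_class L b"
    and "PI_solution f kp ki y x"
    and e: "e = (\<lambda>t. y - x t)" and u: "u = (\<lambda>t. kp *\<^sub>R e t + ki *\<^sub>R integral {0..t} e)"
  obtains \<delta> K where "0 < \<delta>"
    and "\<And>t \<tau>. 0 \<le> t \<Longrightarrow> 0 \<le> \<tau> \<Longrightarrow> norm (e t - e (t + \<tau>))^2 + norm (u t - u (t + \<tau>))^2
      \<le> K * (norm (e 0 - e \<tau>)^2 + norm (u 0 - u \<tau>)^2) * exp (- \<delta> * t)"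
proof (rule incremental_exponential_decay[OF assms(1-3), where 'a="real^'n"])
  fix \<delta> K :: real
  assume \<delta>: "0 < \<delta>" and decay: "\<And>(E :: real \<Rightarrow> real^'n) U \<Delta> t. 0 \<le> t \<Longrightarrow>
    continuous_on {0..t} E \<Longrightarrow> continuous_on {0..t} U \<Longrightarrow>
    (\<And>s. 0 < s \<Longrightarrow> (E has_vector_derivative - \<Delta> s) (at s)) \<Longrightarrow>
    (\<And>s. 0 < s \<Longrightarrow> (U has_vector_derivative ki *\<^sub>R E s - kp *\<^sub>R \<Delta> s) (at s)) \<Longrightarrow>
    (\<And>s. 0 < s \<Longrightarrow> b * norm (U s)^2 - L * norm (U s) * norm (E s) \<le> U s \<bullet> \<Delta> s) \<Longrightarrow>
    norm (E t)^2 + norm (U t)^2 \<le> K * (norm (E 0)^2 + norm (U 0)^2) * exp (- \<delta> * t)"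
  note loop = PI_solution_closed_loop[OF assms(5) e u]
  show thesis
  proof (rule that[OF \<delta>])
    fix t \<tau> :: real
    assume t: "0 \<le> t" and \<tau>: "0 \<le> \<tau>"
    define E where "E = (\<lambda>t. e t - e (t + \<tau>))"
    define U where "U = (\<lambda>t. u t - u (t + \<tau>))"
    define \<Delta> where "\<Delta> = (\<lambda>t. f (x t) (u t) - f (x (t + \<tau>)) (u (t + \<tau>)))"
    have shift: "((\<lambda>t. g (t + \<tau>)) has_vector_derivative g') (at t)"
      if "(g has_vector_derivative g') (at (t + \<tau>))" for g :: "real \<Rightarrow> real^'n" and g' t
    proof -
      have "((\<lambda>t. t + \<tau>) has_vector_derivative 1) (at t)"
        by (auto intro!: derivative_eq_intros)
      from vector_diff_chain_at[OF this that] show ?thesis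
        by (simp add: o_def)
    qed
    have "continuous_on {0..t} (\<lambda>s. g (s + \<tau>))" if "\<And>T. continuous_on {0..T} g"
      for g :: "real \<Rightarrow> real^'n"
      by (rule continuous_on_compose2[OF that[of "t + \<tau>"]]) (auto intro!: continuous_intros simp: \<tau>)
    then have "continuous_on {0..t} E" "continuous_on {0..t} U"
      unfolding E_def U_def using loop(1,3) by (auto intro!: continuous_intros)
    moreover have "(E has_vector_derivative - \<Delta> s) (at s)"
      and "(U has_vector_derivative ki *\<^sub>R E s - kp *\<^sub>R \<Delta> s) (at s)" if "0 < s" for s
      using loop(4,6)[of s] shift[OF loop(4)[of "s + \<tau>"]] shift[OF loop(6)[of "s + \<tau>"]] that \<tau>
      unfolding E_def U_def \<Delta>_def by (auto intro!: derivative_eq_intros simp: algebra_simps)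
    moreover have "b * norm (U s)^2 - L * norm (U s) * norm (E s) \<le> U s \<bullet> \<Delta> s" for s
      using F_class_incremental_monotone[OF assms(4), of "u s" "u (s + \<tau>)" "x s" "x (s + \<tau>)"]
      unfolding E_def U_def \<Delta>_def e by (simp add: norm_minus_commute)
    ultimately have "norm (E t)^2 + norm (U t)^2 \<le> K * (norm (E 0)^2 + norm (U 0)^2) * exp (- \<delta> * t)"
      by (rule decay[OF t])
    then show "norm (e t - e (t + \<tau>))^2 + norm (u t - u (t + \<tau>))^2
        \<le> K * (norm (e 0 - e \<tau>)^2 + norm (u 0 - u \<tau>)^2) * exp (- \<delta> * t)"
      unfolding E_def U_def by simp
  qed
qed

lemma PI_solution_increments_decay:
  fixes f :: "real^'n \<Rightarrow> real^'n \<Rightarrow> real^'n"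
  assumes "0 < L" and "0 < b" and "(kp, ki) \<in> Omega_pi L b" and "f \<in> F_class L b"
    and "PI_solution f kp ki y x"
    and e: "e = (\<lambda>t. y - x t)" and u: "u = (\<lambda>t. kp *\<^sub>R e t + ki *\<^sub>R integral {0..t} e)"
  obtains \<rho> where "(\<rho> \<longlongrightarrow> 0) at_top"
    and "\<And>t \<tau>. 0 \<le> t \<Longrightarrow> 0 \<le> \<tau> \<Longrightarrow> \<tau> \<le> 1 \<Longrightarrow>
      norm (e (t + \<tau>) - e t) \<le> \<rho> t \<and> norm (u (t + \<tau>) - u t) \<le> \<rho> t"
proof (rule PI_solution_shift_decay[OF assms])
  fix \<delta> K :: real
  assume \<delta>: "0 < \<delta>" and decay: "\<And>t \<tau>. 0 \<le> t \<Longrightarrow> 0 \<le> \<tau> \<Longrightarrow>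
    norm (e t - e (t + \<tau>))^2 + norm (u t - u (t + \<tau>))^2
      \<le> K * (norm (e 0 - e \<tau>)^2 + norm (u 0 - u \<tau>)^2) * exp (- \<delta> * t)"
  note loop = PI_solution_closed_loop[OF assms(5) e u]
  obtain Me where Me: "\<And>s. s \<in> {0..1} \<Longrightarrow> norm (e s) \<le> Me"
    using continuous_on_compact_bound[OF compact_Icc loop(1)[of 1]] by blast
  obtain Mu where Mu: "\<And>s. s \<in> {0..1} \<Longrightarrow> norm (u s) \<le> Mu"
    using continuous_on_compact_bound[OF compact_Icc loop(3)[of 1]] by blast
  define M where "M = max Me Mu"
  have M: "norm (e s) \<le> M \<and> norm (u s) \<le> M" if "s \<in> {0..1}" for s
    using Me[OF that] Mu[OF that] unfolding M_def by linarith
  define \<rho> where "\<rho> = (\<lambda>t. sqrt (max K 0 * (8 * M^2) * exp (- \<delta> * t)))"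
  show thesis
  proof (rule that)
    have "((\<lambda>t. exp (- \<delta> * t)) \<longlongrightarrow> 0) at_top"
      using filterlim_compose[OF exp_at_bot filterlim_tendsto_neg_mult_at_bot[OF tendsto_const[of "- \<delta>"] _
            filterlim_ident]] \<delta>
      by simp
    then have "((\<lambda>t. max K 0 * (8 * M^2) * exp (- \<delta> * t)) \<longlongrightarrow> max K 0 * (8 * M^2) * 0) at_top"
      by (intro tendsto_intros)
    then show "(\<rho> \<longlongrightarrow> 0) at_top"
      unfolding \<rho>_def using tendsto_real_sqrt by force
  next
    fix t \<tau> :: real
    assume t: "0 \<le> t" and \<tau>: "0 \<le> \<tau>" "\<tau> \<le> 1"
    have e0: "norm (e 0 - e \<tau>) \<le> 2 * M" and u0: "norm (u 0 - u \<tau>) \<le> 2 * M"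
      using M[of 0] M[of \<tau>] \<tau> by (auto intro!: order_trans[OF norm_triangle_ineq4])
    have "norm (e 0 - e \<tau>)^2 + norm (u 0 - u \<tau>)^2 \<le> (2 * M)^2 + (2 * M)^2"
      using power_mono[OF e0 norm_ge_zero, of 2] power_mono[OF u0 norm_ge_zero, of 2]
      by (rule add_mono)
    then have "K * (norm (e 0 - e \<tau>)^2 + norm (u 0 - u \<tau>)^2) \<le> max K 0 * (8 * M^2)"
      by (intro order_trans[OF mult_right_mono mult_left_mono]) (auto simp: power_mult_distrib)
    then have "norm (e t - e (t + \<tau>))^2 + norm (u t - u (t + \<tau>))^2
        \<le> max K 0 * (8 * M^2) * exp (- \<delta> * t)"
      using decay[OF t \<tau>(1)] mult_right_mono[OF _ exp_ge_zero] order_trans by blast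
    then have "norm (e t - e (t + \<tau>))^2 \<le> max K 0 * (8 * M^2) * exp (- \<delta> * t)"
      and "norm (u t - u (t + \<tau>))^2 \<le> max K 0 * (8 * M^2) * exp (- \<delta> * t)"
      by (smt (verit) zero_le_power2)+
    then show "norm (e (t + \<tau>) - e t) \<le> \<rho> t \<and> norm (u (t + \<tau>) - u t) \<le> \<rho> t"
      unfolding \<rho>_def by (simp add: real_le_rsqrt norm_minus_commute)
  qed
qed

text \<open>Up to an error controlled by the increments of \<open>e\<close>, \<open>e t\<close> is its mean over \<open>[t, t + 1]\<close>,
  and \<open>ki\<close> times that mean is an increment of \<open>u - kp e\<close>.\<close>

lemma tendsto_zero_of_increments:
  fixes e :: "real \<Rightarrow> 'a::banach"
  assumes ce: "\<And>T. continuous_on {0..T} e" and ki: "0 < ki" and \<rho>: "(\<rho> \<longlongrightarrow> 0) at_top"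
    and u: "u = (\<lambda>t. kp *\<^sub>R e t + ki *\<^sub>R integral {0..t} e)"
    and incr: "\<And>t \<tau>. 0 \<le> t \<Longrightarrow> 0 \<le> \<tau> \<Longrightarrow> \<tau> \<le> 1 \<Longrightarrow>
      norm (e (t + \<tau>) - e t) \<le> \<rho> t \<and> norm (u (t + \<tau>) - u t) \<le> \<rho> t"
  shows "(e \<longlongrightarrow> 0) at_top"
proof (rule Lim_null_comparison)
  define Z where "Z = (\<lambda>t. integral {0..t} e)"
  show "\<forall>\<^sub>F t in at_top. norm (e t) \<le> ((1 + \<bar>kp\<bar>) / ki + 1) * \<rho> t"
    unfolding eventually_at_top_linorder
  proof (intro exI allI impI)
    fix t :: real
    assume t: "0 \<le> t"
    have int: "e integrable_on {0..t + 1}"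
      by (rule integrable_continuous_interval[OF ce])
    have mean: "Z (t + 1) - Z t = e t + integral {t..t + 1} (\<lambda>s. e s - e t)"
      unfolding Z_def
      using Henstock_Kurzweil_Integration.integral_combine[OF t _ int]
        integral_diff[OF integrable_on_subinterval[OF int] integrable_const_ivl, of t "t + 1" "e t"] t
      by (simp add: algebra_simps)
    have "norm (integral {t..t + 1} (\<lambda>s. e s - e t)) \<le> \<rho> t * ((t + 1) - t)"
    proof (rule integral_bound)
      show "continuous_on {t..t + 1} (\<lambda>s. e s - e t)"
        using t by (intro continuous_intros continuous_on_subset[OF ce[of "t + 1"]]) auto
      fix s assume "s \<in> {t..t + 1}"
      then show "norm (e s - e t) \<le> \<rho> t"
        using incr[of t "s - t"] t by simp
    qed simp
    then have err: "norm (integral {t..t + 1} (\<lambda>s. e s - e t)) \<le> \<rho> t"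
      by simp
    have "ki *\<^sub>R (Z (t + 1) - Z t) = (u (t + 1) - u t) - kp *\<^sub>R (e (t + 1) - e t)"
      unfolding u Z_def by (simp add: algebra_simps)
    then have "ki * norm (Z (t + 1) - Z t) \<le> norm (u (t + 1) - u t) + \<bar>kp\<bar> * norm (e (t + 1) - e t)"
      using ki by (metis abs_of_pos norm_scaleR norm_triangle_ineq4)
    also have "\<dots> \<le> (1 + \<bar>kp\<bar>) * \<rho> t"
      using incr[OF t, of 1] mult_left_mono[of "norm (e (t + 1) - e t)" "\<rho> t" "\<bar>kp\<bar>"]
      by (simp add: algebra_simps)
    finally have "norm (Z (t + 1) - Z t) \<le> (1 + \<bar>kp\<bar>) / ki * \<rho> t"
      using ki by (simp add: field_simps)
    then show "norm (e t) \<le> ((1 + \<bar>kp\<bar>) / ki + 1) * \<rho> t"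
      using mean err norm_triangle_ineq4[of "Z (t + 1) - Z t" "integral {t..t + 1} (\<lambda>s. e s - e t)"]
      by (simp add: algebra_simps)
  qed
  show "((\<lambda>t. ((1 + \<bar>kp\<bar>) / ki + 1) * \<rho> t) \<longlongrightarrow> 0) at_top"
    using tendsto_mult_right_zero[OF \<rho>] by simp
qed

theorem PI_solution_tendsto_setpoint:
  fixes f :: "real^'n \<Rightarrow> real^'n \<Rightarrow> real^'n"
  assumes "0 < L" and "0 < b" and "(kp, ki) \<in> Omega_pi L b" and "f \<in> F_class L b"
    and "PI_solution f kp ki y x"
  shows "(x \<longlongrightarrow> y) at_top"
proof -
  define e where "e = (\<lambda>t. y - x t)"
  define u where "u = (\<lambda>t. kp *\<^sub>R e t + ki *\<^sub>R integral {0..t} e)"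
  obtain \<rho> where "(\<rho> \<longlongrightarrow> 0) at_top" and "\<And>t \<tau>. 0 \<le> t \<Longrightarrow> 0 \<le> \<tau> \<Longrightarrow> \<tau> \<le> 1 \<Longrightarrow>
      norm (e (t + \<tau>) - e t) \<le> \<rho> t \<and> norm (u (t + \<tau>) - u t) \<le> \<rho> t"
    using PI_solution_increments_decay[OF assms e_def u_def] by blast
  moreover have "0 < ki"
    using assms(3) by (simp add: Omega_pi_def)
  ultimately have "(e \<longlongrightarrow> 0) at_top"
    using PI_solution_closed_loop(1)[OF assms(5) e_def u_def]
    by (intro tendsto_zero_of_increments[OF _ _ _ u_def]) auto
  then have "((\<lambda>t. y - e t) \<longlongrightarrow> y - 0) at_top"
    by (intro tendsto_intros)
  then show ?thesis
    unfolding e_def by simp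
qed

section \<open>Convergence of scalar loops for gains in \<open>Omega_pi'\<close>\<close>

lemma DERIV_abs_bound_imp_abs_diff_le:
  fixes F :: "real \<Rightarrow> real"
  assumes "t \<le> s" and "continuous_on {t..s} F"
    and "\<And>r. t < r \<Longrightarrow> r < s \<Longrightarrow> (F has_real_derivative F' r) (at r)"
    and "\<And>r. t < r \<Longrightarrow> r < s \<Longrightarrow> \<bar>F' r\<bar> \<le> M"
  shows "\<bar>F s - F t\<bar> \<le> M * (s - t)"
proof -
  have "F s - F t \<le> M * (s - t)"
    using assms by (intro DERIV_bound_imp_diff_le) (auto simp: abs_le_iff)
  moreover have "(- F s) - (- F t) \<le> M * (s - t)"
    using assms by (intro DERIV_bound_imp_diff_le[where F' = "\<lambda>r. - F' r"])
      (auto intro!: derivative_eq_intros continuous_intros simp: abs_le_iff)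
  ultimately show ?thesis
    by linarith
qed

lemma DERIV_nonpos_imp_antimono:
  fixes V :: "real \<Rightarrow> real"
  assumes cV: "\<And>T. continuous_on {0..T} V"
    and dV: "\<And>t. 0 < t \<Longrightarrow> (V has_real_derivative V' t) (at t)"
    and V': "\<And>t. 0 < t \<Longrightarrow> V' t \<le> 0"
    and "0 \<le> t" and "t \<le> s"
  shows "V s \<le> V t"
proof -
  have "V s - V t \<le> 0 * (s - t)"
  proof (rule DERIV_bound_imp_diff_le[OF \<open>t \<le> s\<close>])
    show "continuous_on {t..s} V"
      using continuous_on_subset[OF cV[of s]] \<open>0 \<le> t\<close> by auto
    fix r assume "t < r" "r < s"
    then have "0 < r"
      using \<open>0 \<le> t\<close> by simp
    then show "(V has_real_derivative V' r) (at r)"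
      by (rule dV)
    show "V' r \<le> 0"
      using \<open>0 < r\<close> by (rule V')
  qed
  then show ?thesis
    by simp
qed

lemma dissipation_drop:
  fixes V E :: "real \<Rightarrow> real"
  assumes cV: "\<And>T. continuous_on {0..T} V"
    and dV: "\<And>t. 0 < t \<Longrightarrow> (V has_real_derivative V' t) (at t)"
    and V': "\<And>t. 0 < t \<Longrightarrow> V' t \<le> - \<alpha> * (E t)^2"
    and lip: "M-lipschitz_on {0..} E" and M: "0 < M" and \<alpha>: "0 < \<alpha>"
    and t: "0 \<le> t" and \<eta>: "0 < \<eta>" "\<eta> \<le> \<bar>E t\<bar>"
  shows "V (t + \<eta> / (2 * M)) - V t \<le> - (\<alpha> * (\<eta> / 2)^2) * (\<eta> / (2 * M))"
proof -
  define h where "h = \<eta> / (2 * M)"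
  have "V (t + h) - V t \<le> - (\<alpha> * (\<eta> / 2)^2) * ((t + h) - t)"
  proof (rule DERIV_bound_imp_diff_le)
    show "t \<le> t + h"
      unfolding h_def using \<eta> M by simp
    show "continuous_on {t..t + h} V"
      using continuous_on_subset[OF cV[of "t + h"]] t by auto
    fix r assume r: "t < r" "r < t + h"
    then show "(V has_real_derivative V' r) (at r)"
      using t by (intro dV) simp
    have "\<bar>E r - E t\<bar> \<le> M * (r - t)"
      using lipschitz_onD[OF lip, of r t] t r unfolding dist_real_def by simp
    also have "\<dots> \<le> \<eta> / 2"
      using r M unfolding h_def by (simp add: field_simps)
    finally have "\<eta> / 2 \<le> \<bar>E r\<bar>"
      using \<eta> by arith
    then have "(\<eta> / 2)^2 \<le> (E r)^2"
      using \<eta> by (metis abs_le_square_iff abs_of_pos half_gt_zero)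
    then have "\<alpha> * (\<eta> / 2)^2 \<le> \<alpha> * (E r)^2"
      using \<alpha> by (simp add: mult_left_mono)
    then show "V' r \<le> - (\<alpha> * (\<eta> / 2)^2)"
      using V'[of r] r t by simp
  qed
  then show ?thesis
    unfolding h_def by simp
qed

text \<open>A Barbalat-type argument: whenever \<open>\<bar>E\<bar> \<ge> \<eta>\<close>, the Lipschitz bound makes \<open>V\<close> drop by a fixed
  amount, which can happen only finitely often.\<close>

lemma dissipation_tendsto_zero:
  fixes V E :: "real \<Rightarrow> real"
  assumes cV: "\<And>T. continuous_on {0..T} V"
    and dV: "\<And>t. 0 < t \<Longrightarrow> (V has_real_derivative V' t) (at t)"
    and V': "\<And>t. 0 < t \<Longrightarrow> V' t \<le> - \<alpha> * (E t)^2"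
    and V0: "\<And>t. 0 \<le> t \<Longrightarrow> 0 \<le> V t"
    and \<alpha>: "0 < \<alpha>" and lip: "C-lipschitz_on {0..} E"
  shows "(E \<longlongrightarrow> 0) at_top"
proof (rule ccontr)
  assume "\<not> (E \<longlongrightarrow> 0) at_top"
  then obtain \<eta> where \<eta>: "0 < \<eta>" and far: "\<And>N. \<exists>t\<ge>N. \<eta> \<le> \<bar>E t\<bar>"
    unfolding tendsto_iff eventually_at_top_linorder dist_real_def by (force simp: not_less)
  define M where "M = C + 1"
  have M: "0 < M" and lipM: "M-lipschitz_on {0..} E"
    using lipschitz_on_nonneg[OF lip] lipschitz_on_le[OF lip] unfolding M_def by simp_all
  define h where "h = \<eta> / (2 * M)"
  define \<kappa> where "\<kappa> = \<alpha> * (\<eta> / 2)^2 * h"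
  have h: "0 < h" and \<kappa>: "0 < \<kappa>"
    unfolding h_def \<kappa>_def using \<eta> M \<alpha> by simp_all
  have "V' t \<le> 0" if "0 < t" for t
  proof -
    have "0 \<le> \<alpha> * (E t)^2"
      using \<alpha> by simp
    then show ?thesis
      using V'[OF that] by linarith
  qed
  note mono = DERIV_nonpos_imp_antimono[OF cV dV this]
  have descent: "\<exists>t\<ge>0. V t \<le> V 0 - real n * \<kappa>" for n
  proof (induction n)
    case 0
    then show ?case by auto
  next
    case (Suc n)
    then obtain t where t: "0 \<le> t" "V t \<le> V 0 - real n * \<kappa>"
      by blast
    obtain s where s: "t \<le> s" "\<eta> \<le> \<bar>E s\<bar>"
      using far[of t] by blast
    have "V (s + h) - V s \<le> - \<kappa>"
      using dissipation_drop[OF cV dV V' lipM M \<alpha> _ \<eta>(1) s(2)] t s unfolding \<kappa>_def h_def by simp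
    then have "V (s + h) \<le> V 0 - real (Suc n) * \<kappa>"
      using mono[of t s] s t by (simp add: algebra_simps)
    then show ?case
      using s t h by (intro exI[of _ "s + h"]) simp
  qed
  obtain n :: nat where "V 0 < real n * \<kappa>"
    using ex_less_of_nat_mult[OF \<kappa>] by blast
  moreover obtain t where "0 \<le> t" and "V t \<le> V 0 - real n * \<kappa>"
    using descent[of n] by blast
  ultimately show False
    using V0[of t] by linarith
qed

lemma exists_antiderivative:
  fixes \<psi> :: "real \<Rightarrow> real"
  assumes c: "continuous_on UNIV \<psi>"
  obtains P where "P 0 = 0" and "\<And>s. (P has_real_derivative \<psi> s) (at s)"
proof -
  define P where "P = (\<lambda>s. integral {0..s} \<psi> - integral {s..0} \<psi>)"
  have int: "\<psi> integrable_on {a..b}" for a b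
    by (rule integrable_continuous_interval[OF continuous_on_subset[OF c]]) simp
  have "(P has_real_derivative \<psi> s) (at s)" for s
  proof -
    define R where "R = \<bar>s\<bar> + 1"
    have shift: "P r = integral {-R..r} \<psi> - integral {-R..0} \<psi>" if "- R < r" for r
    proof (cases "0 \<le> r")
      case True
      have "- R \<le> 0"
        unfolding R_def by simp
      from Henstock_Kurzweil_Integration.integral_combine[OF this True int] True show ?thesis
        unfolding P_def by (cases "r = 0") auto
    next
      case False
      then show ?thesis
        using Henstock_Kurzweil_Integration.integral_combine[of "-R" r 0 \<psi>] int that
        unfolding P_def by auto
    qed
    have "((\<lambda>r. integral {-R..r} \<psi>) has_real_derivative \<psi> s) (at s within {-R..R})"
      by (rule integral_has_real_derivative[OF continuous_on_subset[OF c]]) (auto simp: R_def)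
    moreover have "at s within {-R..R} = at s"
      by (rule at_within_interior) (auto simp: R_def)
    ultimately have "((\<lambda>r. integral {-R..r} \<psi> - integral {-R..0} \<psi>) has_real_derivative \<psi> s) (at s)"
      by (auto intro!: derivative_eq_intros)
    then show ?thesis
      by (rule has_field_derivative_transform_within_open[of _ _ _ "{-R<..}"])
        (use shift in \<open>auto simp: R_def\<close>)
  qed
  moreover have "P 0 = 0"
    unfolding P_def by simp
  ultimately show thesis
    using that by blast
qed

lemma strongly_monotone_has_root:
  fixes g :: "real \<Rightarrow> real"
  assumes "continuous_on UNIV g" and "0 < b"
    and mono: "\<And>c1 c2. b * (c1 - c2)^2 \<le> (c1 - c2) * (g c1 - g c2)"
  obtains c where "g c = 0"
proof -
  define r where "r = \<bar>g 0\<bar> / b"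
  have br: "b * r = \<bar>g 0\<bar>" and r: "0 \<le> r"
    unfolding r_def using assms(2) by simp_all
  have "g (- r) \<le> 0 \<and> 0 \<le> g r"
  proof (cases "r = 0")
    case True
    then show ?thesis
      using br assms(2) by simp
  next
    case False
    then have "0 < r"
      using r by simp
    moreover have "r * (b * r) \<le> r * (g r - g 0)" and "r * (b * r) \<le> r * (g 0 - g (- r))"
      using mono[of r 0] mono[of 0 "- r"] by (simp_all add: power2_eq_square algebra_simps)
    ultimately have "b * r \<le> g r - g 0" and "b * r \<le> g 0 - g (- r)"
      by (simp_all add: mult_le_cancel_left_pos)
    then show ?thesis
      using br by linarith
  qed
  then obtain c where "g c = 0"
    using IVT'[of g "- r" 0 r] r continuous_on_subset[OF assms(1)] by fastforce
  then show thesis ..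
qed

lemma antiderivative_lower_bound:
  fixes P \<psi> :: "real \<Rightarrow> real"
  assumes P0: "P 0 = 0" and dP: "\<And>s. (P has_real_derivative \<psi> s) (at s)"
    and mono: "\<And>s. b * s^2 \<le> s * \<psi> s"
  shows "b * s^2 / 2 \<le> P s"
proof -
  define G where "G = (\<lambda>s. P s - b * s^2 / 2)"
  have dG: "(G has_real_derivative \<psi> s - b * s) (at s)" for s
    unfolding G_def by (auto intro!: derivative_eq_intros dP)
  then have cG: "continuous_on S G" for S
    by (meson DERIV_continuous continuous_at_imp_continuous_on)
  have sign: "0 \<le> s * (\<psi> s - b * s)" for s
    using mono[of s] by (simp add: power2_eq_square algebra_simps)
  have pos: "b * r \<le> \<psi> r" if "0 < r" for r
    using sign[of r] that by (simp add: zero_le_mult_iff)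
  have neg: "\<psi> r \<le> b * r" if "r < 0" for r
    using sign[of r] that by (simp add: zero_le_mult_iff)
  have "0 \<le> G s"
  proof (cases "0 \<le> s")
    case True
    have "(- G s) - (- G 0) \<le> 0 * (s - 0)"
      using pos True cG
      by (intro DERIV_bound_imp_diff_le[where F' = "\<lambda>r. - (\<psi> r - b * r)"])
        (auto intro!: derivative_eq_intros dG continuous_intros)
    then show ?thesis
      using P0 by (simp add: G_def)
  next
    case False
    have "G 0 - G s \<le> 0 * (0 - s)"
      using neg False cG
      by (intro DERIV_bound_imp_diff_le[where F' = "\<lambda>r. \<psi> r - b * r"]) (auto intro!: dG)
    then show ?thesis
      using P0 by (simp add: G_def)
  qed
  then show ?thesis
    unfolding G_def by simp
qed

lemma has_vector_derivative_vec_nth: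
  "(g has_vector_derivative D) (at t) \<Longrightarrow> ((\<lambda>t. g t $ i) has_real_derivative D $ i) (at t)"
  unfolding has_real_derivative_iff_has_vector_derivative has_vector_derivative_def
  by (drule bounded_linear.has_derivative[OF bounded_linear_vec_nth, of _ _ _ i]) (simp add: mult.commute)

lemma vec_nth_1_eq: "vec (z $ 1) = (z :: 'a^1)"
  by (simp add: vec_eq_iff)

lemma F_class_scalar:
  fixes f :: "real^1 \<Rightarrow> real^1 \<Rightarrow> real^1"
  assumes "f \<in> F_class L b" and F_def: "F = (\<lambda>a c. f (vec a) (vec c) $ 1)"
  shows "b * (c1 - c2)^2 \<le> (c1 - c2) * (F a c1 - F a c2)"
    and "\<bar>F a1 c - F a2 c\<bar> \<le> L * \<bar>a1 - a2\<bar>"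
    and "continuous_on UNIV (\<lambda>p. F (fst p) (snd p))"
    and "f z w = vec (F (z $ 1) (w $ 1))"
proof -
  show "b * (c1 - c2)^2 \<le> (c1 - c2) * (F a c1 - F a c2)"
    using F_class_strongly_monotone[OF assms(1), of "vec c1" "vec c2" "vec a"]
    unfolding F_def norm_real inner_vec_def by simp
  show "\<bar>F a1 c - F a2 c\<bar> \<le> L * \<bar>a1 - a2\<bar>"
    using F_class_lipschitz[OF assms(1), of "vec a1" "vec c" "vec a2"]
    unfolding F_def norm_real by simp
  have cvec: "continuous_on UNIV (vec :: real \<Rightarrow> real^1)"
    using continuous_vec continuous_at_imp_continuous_on by blast
  have "continuous_on UNIV (\<lambda>p. uncurried f (vec (fst p), vec (snd p)) $ 1)"
    by (intro continuous_intros continuous_on_compose2[OF F_class_continuous[OF assms(1)]]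
        continuous_on_compose2[OF cvec]) auto
  then show "continuous_on UNIV (\<lambda>p. F (fst p) (snd p))"
    unfolding F_def uncurried_def by simp
  show "f z w = vec (F (z $ 1) (w $ 1))"
    unfolding F_def vec_nth_1_eq ..
qed

text \<open>Strong monotonicity in \<open>u\<close> beats the Lipschitz dependence on \<open>x\<close> once \<open>kp b > L\<close>.\<close>

lemma scalar_error_feedback_monotone:
  fixes F :: "real \<Rightarrow> real \<Rightarrow> real"
  assumes mono: "\<And>a c1 c2. b * (c1 - c2)^2 \<le> (c1 - c2) * (F a c1 - F a c2)"
    and lip: "\<And>a1 a2 c. \<bar>F a1 c - F a2 c\<bar> \<le> L * \<bar>a1 - a2\<bar>"
    and kp: "0 < kp"
  shows "(kp * b - L) * a^2 \<le> a * (F (y - a) (c + kp * a) - F y c)"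
proof -
  have "kp * (b * kp * a^2) \<le> kp * (a * (F (y - a) (c + kp * a) - F (y - a) c))"
    using mono[of "c + kp * a" c "y - a"] by (simp add: power2_eq_square algebra_simps)
  then have "b * kp * a^2 \<le> a * (F (y - a) (c + kp * a) - F (y - a) c)"
    using kp by simp
  moreover have "\<bar>a\<bar> * \<bar>F (y - a) c - F y c\<bar> \<le> L * a^2"
    using mult_left_mono[OF lip[of "y - a" c y], of "\<bar>a\<bar>"]
    by (simp add: power2_eq_square algebra_simps)
  then have "\<bar>a * (F (y - a) c - F y c)\<bar> \<le> L * a^2"
    by (simp add: abs_mult)
  ultimately show ?thesis
    by (simp add: algebra_simps abs_le_iff)
qed

text \<open>For the planar system \<open>E' = - \<phi> E w\<close>, \<open>w' = ki E\<close>, the Lyapunov function is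
  \<open>V = P(w) / ki + E\<^sup>2 / 2\<close> with \<open>P\<close> the primitive of \<open>\<phi> 0\<close>.\<close>

lemma planar_PI_lyapunov:
  fixes E w :: "real \<Rightarrow> real" and \<phi> :: "real \<Rightarrow> real \<Rightarrow> real"
  assumes ki: "0 < ki"
    and c\<phi>: "continuous_on UNIV (\<lambda>p. \<phi> (fst p) (snd p))"
    and \<phi>w: "\<And>s. b * s^2 \<le> s * \<phi> 0 s"
    and cE: "\<And>T. continuous_on {0..T} E" and cw: "\<And>T. continuous_on {0..T} w"
    and dE: "\<And>t. 0 < t \<Longrightarrow> (E has_real_derivative - \<phi> (E t) (w t)) (at t)"
    and dw: "\<And>t. 0 < t \<Longrightarrow> (w has_real_derivative ki * E t) (at t)"
  obtains V where "\<And>T. continuous_on {0..T} V"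
    and "\<And>t. 0 < t \<Longrightarrow> (V has_real_derivative - (E t * (\<phi> (E t) (w t) - \<phi> 0 (w t)))) (at t)"
    and "\<And>t. b * (w t)^2 / (2 * ki) + (E t)^2 / 2 \<le> V t"
proof -
  have "continuous_on UNIV (\<lambda>s. (\<lambda>p. \<phi> (fst p) (snd p)) (0, s))"
    by (rule continuous_on_compose2[OF c\<phi>]) (auto intro!: continuous_intros)
  then have "continuous_on UNIV (\<phi> 0)"
    by simp
  then obtain P where P0: "P 0 = 0" and dP: "\<And>s. (P has_real_derivative \<phi> 0 s) (at s)"
    by (rule exists_antiderivative) blast
  define V where "V = (\<lambda>t. P (w t) / ki + (E t)^2 / 2)"
  have "continuous_on UNIV P"
    using dP by (meson DERIV_continuous continuous_at_imp_continuous_on)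
  then have "continuous_on {0..T} V" for T
    unfolding V_def using ki by (intro continuous_intros cE continuous_on_compose2[OF _ cw]) auto
  moreover have "(V has_real_derivative - (E t * (\<phi> (E t) (w t) - \<phi> 0 (w t)))) (at t)" if "0 < t" for t
    unfolding V_def using ki
    by (auto intro!: derivative_eq_intros DERIV_chain2[OF dP dw[OF that]] dE[OF that]
        simp: algebra_simps)
  moreover have "b * (w t)^2 / (2 * ki) + (E t)^2 / 2 \<le> V t" for t
    using divide_right_mono[OF antiderivative_lower_bound[OF P0 dP \<phi>w, of "w t"], of ki] ki
    unfolding V_def by simp
  ultimately show thesis
    by (rule that)
qed

lemma bounded_planar_trajectory_lipschitz:
  fixes E w :: "real \<Rightarrow> real" and \<phi> :: "real \<Rightarrow> real \<Rightarrow> real"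
  assumes c\<phi>: "continuous_on UNIV (\<lambda>p. \<phi> (fst p) (snd p))"
    and bounded: "\<And>t. 0 \<le> t \<Longrightarrow> \<bar>E t\<bar> \<le> R \<and> \<bar>w t\<bar> \<le> R"
    and cE: "\<And>T. continuous_on {0..T} E"
    and dE: "\<And>t. 0 < t \<Longrightarrow> (E has_real_derivative - \<phi> (E t) (w t)) (at t)"
  shows "\<exists>C. C-lipschitz_on {0..} E"
proof -
  obtain M where M: "\<And>p. p \<in> {-R..R} \<times> {-R..R} \<Longrightarrow> norm (\<phi> (fst p) (snd p)) \<le> M"
    using continuous_on_compact_bound[OF compact_Times[OF compact_Icc compact_Icc]
        continuous_on_subset[OF c\<phi>]] by blast
  have "\<bar>E s - E t\<bar> \<le> (\<bar>M\<bar> + 1) * (s - t)" if "0 \<le> t" "t \<le> s" for t s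
  proof (rule DERIV_abs_bound_imp_abs_diff_le[OF that(2)])
    show "continuous_on {t..s} E"
      using continuous_on_subset[OF cE[of s]] that by auto
    fix r assume "t < r" "r < s"
    then have "0 < r"
      using that by simp
    then show "(E has_real_derivative - \<phi> (E r) (w r)) (at r)"
      by (rule dE)
    show "\<bar>- \<phi> (E r) (w r)\<bar> \<le> \<bar>M\<bar> + 1"
      using M[of "(E r, w r)"] bounded[of r] \<open>0 < r\<close> by (auto simp: abs_le_iff)
  qed
  then have "(\<bar>M\<bar> + 1)-lipschitz_on {0..} E"
    by (intro lipschitz_on_leI) (auto simp: dist_real_def abs_minus_commute)
  then show ?thesis ..
qed

lemma planar_PI_tendsto_zero:
  fixes E w :: "real \<Rightarrow> real" and \<phi> :: "real \<Rightarrow> real \<Rightarrow> real"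
  assumes b: "0 < b" and ki: "0 < ki" and \<alpha>: "0 < \<alpha>"
    and c\<phi>: "continuous_on UNIV (\<lambda>p. \<phi> (fst p) (snd p))"
    and \<phi>E: "\<And>a s. \<alpha> * a^2 \<le> a * (\<phi> a s - \<phi> 0 s)"
    and \<phi>w: "\<And>s. b * s^2 \<le> s * \<phi> 0 s"
    and cE: "\<And>T. continuous_on {0..T} E" and cw: "\<And>T. continuous_on {0..T} w"
    and dE: "\<And>t. 0 < t \<Longrightarrow> (E has_real_derivative - \<phi> (E t) (w t)) (at t)"
    and dw: "\<And>t. 0 < t \<Longrightarrow> (w has_real_derivative ki * E t) (at t)"
  shows "(E \<longlongrightarrow> 0) at_top"
proof (rule planar_PI_lyapunov[OF ki c\<phi> \<phi>w cE cw dE dw])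
  fix V
  assume cV: "\<And>T. continuous_on {0..T} V"
    and dV: "\<And>t. 0 < t \<Longrightarrow> (V has_real_derivative - (E t * (\<phi> (E t) (w t) - \<phi> 0 (w t)))) (at t)"
    and V_lower: "\<And>t. b * (w t)^2 / (2 * ki) + (E t)^2 / 2 \<le> V t"
  have V'_le: "- (E t * (\<phi> (E t) (w t) - \<phi> 0 (w t))) \<le> - \<alpha> * (E t)^2" for t
    using \<phi>E[of "E t" "w t"] by simp
  have nonneg: "0 \<le> b * (w t)^2 / (2 * ki)" "0 \<le> (E t)^2 / 2" for t
    using b ki by simp_all
  have V_nonneg: "0 \<le> V t" for t
    using V_lower[of t] nonneg[of t] by linarith
  have V'_nonpos: "- (E t * (\<phi> (E t) (w t) - \<phi> 0 (w t))) \<le> 0" for t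
  proof -
    have "0 \<le> \<alpha> * (E t)^2"
      using \<alpha> by simp
    then show ?thesis
      using V'_le[of t] by linarith
  qed
  have V_le: "V t \<le> V 0" if "0 \<le> t" for t
    by (rule DERIV_nonpos_imp_antimono[OF cV dV _ order_refl that]) (use V'_nonpos in auto)
  define R where "R = sqrt (2 * V 0) + sqrt (2 * ki * V 0 / b)"
  have "\<bar>E t\<bar> \<le> R \<and> \<bar>w t\<bar> \<le> R" if "0 \<le> t" for t
  proof -
    have "(E t)^2 \<le> 2 * V 0" and "b * (w t)^2 / (2 * ki) \<le> V 0"
      using V_lower[of t] V_le[OF that] nonneg[of t] by linarith+
    then have "\<bar>E t\<bar> \<le> sqrt (2 * V 0)" and "\<bar>w t\<bar> \<le> sqrt (2 * ki * V 0 / b)"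
      using b ki by (simp_all add: real_le_rsqrt field_simps)
    moreover have "0 \<le> sqrt (2 * V 0)" and "0 \<le> sqrt (2 * ki * V 0 / b)"
      using V_nonneg[of 0] b ki by simp_all
    ultimately show ?thesis
      unfolding R_def by linarith
  qed
  then obtain C where "C-lipschitz_on {0..} E"
    using bounded_planar_trajectory_lipschitz[OF c\<phi> _ cE dE] by blast
  then show ?thesis
    using V'_le V_nonneg by (intro dissipation_tendsto_zero[OF cV dV _ _ \<alpha>]) auto
qed

theorem PI_solution_tendsto_setpoint_scalar:
  fixes f :: "real^1 \<Rightarrow> real^1 \<Rightarrow> real^1"
  assumes "0 < L" and "0 < b" and "(kp, ki) \<in> Omega_pi' L b" and "f \<in> F_class L b"
    and "PI_solution f kp ki y x"
  shows "(x \<longlongrightarrow> y) at_top"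
proof -
  have ki: "0 < ki" and \<alpha>: "0 < kp * b - L"
    using assms(3) by (auto simp: Omega_pi'_def)
  have kp: "0 < kp"
    using \<alpha> assms(1,2) zero_less_mult_iff[of kp b] by linarith
  define F where "F = (\<lambda>a c. f (vec a) (vec c) $ 1)"
  note scalar = F_class_scalar[OF assms(4) F_def]
  have cF: "continuous_on S (\<lambda>q. F (g q) (h q))"
    if "continuous_on S g" "continuous_on S h" for S and g h :: "'a::topological_space \<Rightarrow> real"
    using continuous_on_compose2[OF scalar(3), of S "\<lambda>q. (g q, h q)"] that
    by (auto intro: continuous_on_Pair)
  define y1 where "y1 = y $ 1"
  \<comment> \<open>At the setpoint the plant is at rest for the control \<open>cs\<close>; \<open>w\<close> below is the integral
    action measured from \<open>cs\<close>, and \<open>\<phi>\<close> is the plant in these error coordinates.\<close>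
  obtain cs where cs: "F y1 cs = 0"
  proof (rule strongly_monotone_has_root[OF _ assms(2) scalar(1)])
    show "continuous_on UNIV (F y1)"
      using cF[of UNIV "\<lambda>_. y1" "\<lambda>c. c"] by (simp add: continuous_on_id)
  qed
  define e where "e = (\<lambda>t. y - x t)"
  define u where "u = (\<lambda>t. kp *\<^sub>R e t + ki *\<^sub>R integral {0..t} e)"
  note loop = PI_solution_closed_loop[OF assms(5) e_def u_def]
  define \<phi> where "\<phi> = (\<lambda>a s. F (y1 - a) (cs + kp * a + s))"
  define E where "E = (\<lambda>t. e t $ 1)"
  define w where "w = (\<lambda>t. ki * integral {0..t} e $ 1 - cs)"
  have feq: "f (x t) (u t) $ 1 = \<phi> (E t) (w t)" for t
    unfolding scalar(4) \<phi>_def E_def w_def u_def e_def y1_def by (simp add: algebra_simps)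
  have "(E \<longlongrightarrow> 0) at_top"
  proof (rule planar_PI_tendsto_zero[OF assms(2) ki \<alpha>])
    show "continuous_on UNIV (\<lambda>p. \<phi> (fst p) (snd p))"
      unfolding \<phi>_def by (intro cF continuous_intros)
    show "(kp * b - L) * a^2 \<le> a * (\<phi> a s - \<phi> 0 s)" for a s
      using scalar_error_feedback_monotone[OF scalar(1,2) kp, of a y1 "cs + s"]
      unfolding \<phi>_def by (simp add: ac_simps)
    show "b * s^2 \<le> s * \<phi> 0 s" for s
      using scalar(1)[of "cs + s" cs y1] cs unfolding \<phi>_def by simp
    show "continuous_on {0..T} E" "continuous_on {0..T} w" for T
      unfolding E_def w_def using loop(1,2) by (auto intro!: continuous_intros)
    show "(E has_real_derivative - \<phi> (E t) (w t)) (at t)" if "0 < t" for t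
      using has_vector_derivative_vec_nth[OF loop(4)[OF that], of 1] feq[of t]
      unfolding E_def by simp
    show "(w has_real_derivative ki * E t) (at t)" if "0 < t" for t
      using has_vector_derivative_vec_nth[OF loop(5)[OF that], of 1]
      unfolding w_def E_def by (auto intro!: derivative_eq_intros)
  qed
  then have "((\<lambda>t. y - E t *\<^sub>R 1) \<longlongrightarrow> y - 0 *\<^sub>R 1) at_top"
    by (intro tendsto_intros)
  moreover have "y - E t *\<^sub>R 1 = x t" for t
    unfolding E_def e_def by (simp add: vec_eq_iff)
  ultimately show ?thesis
    by simp
qed

section \<open>Necessity of \<open>Omega_pi'\<close> for scalar loops\<close>

text \<open>For the plant \<open>a x + B u + d\<close> with \<open>y = 0\<close> and \<open>x = X 1\<close>, the control is
  \<open>- (kp X + ki G) 1\<close>, so the closed loop is the scalar equation \<open>ode\<close>.\<close>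

lemma affine_PI_counterexample:
  fixes X X' G :: "real \<Rightarrow> real"
  assumes "\<bar>a\<bar> \<le> L" and "b \<le> B"
    and dX: "\<And>t. (X has_real_derivative X' t) (at t)"
    and dG: "\<And>t. (G has_real_derivative X t) (at t)" and "G 0 = 0"
    and ode: "\<And>t. a * X t - B * (kp * X t + ki * G t) + d = X' t"
    and "\<not> (X \<longlongrightarrow> 0) at_top"
  shows "\<exists>f \<in> F_class L b. \<exists>y (x :: real \<Rightarrow> real^1). PI_solution f kp ki y x \<and> \<not> (x \<longlongrightarrow> y) at_top"
proof (intro bexI exI conjI)
  define f where "f = (\<lambda>x u :: real^1. a *\<^sub>R x + B *\<^sub>R u + d *\<^sub>R 1)"
  show "f \<in> F_class L b"
    unfolding f_def by (rule affine_in_F_class[OF assms(1,2)])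
  show "PI_solution f kp ki 0 (\<lambda>t. X t *\<^sub>R 1)"
    unfolding PI_solution_def
  proof (intro allI impI)
    fix t :: real
    assume t: "0 \<le> t"
    have "((\<lambda>s. - (G s *\<^sub>R 1)) has_vector_derivative - (X s *\<^sub>R (1::real^1))) (at s within {0..t})"
      for s
      using has_field_derivative_at_within[OF dG[of s]]
      by (auto intro!: derivative_eq_intros
          simp: has_real_derivative_iff_has_vector_derivative[symmetric])
    from fundamental_theorem_of_calculus[OF t this] \<open>G 0 = 0\<close>
    have "((\<lambda>s. 0 - X s *\<^sub>R (1::real^1)) has_integral - (G t *\<^sub>R 1)) {0..t}"
      by simp
    then have "integral {0..t} (\<lambda>s. 0 - X s *\<^sub>R (1::real^1)) = - (G t *\<^sub>R 1)"
      by (rule integral_unique)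
    moreover have "((\<lambda>t. X t *\<^sub>R (1::real^1)) has_vector_derivative X' t *\<^sub>R 1) (at t within {0..})"
      using has_field_derivative_at_within[OF dX[of t]]
      by (auto intro!: derivative_eq_intros
          simp: has_real_derivative_iff_has_vector_derivative[symmetric])
    ultimately show "((\<lambda>t. X t *\<^sub>R 1) has_vector_derivative f (X t *\<^sub>R 1)
        (kp *\<^sub>R (0 - X t *\<^sub>R 1) + ki *\<^sub>R integral {0..t} (\<lambda>s. 0 - X s *\<^sub>R 1))) (at t within {0..})"
      unfolding f_def ode[of t, symmetric] by (simp add: algebra_simps)
  qed
  show "\<not> ((\<lambda>t. X t *\<^sub>R (1::real^1)) \<longlongrightarrow> 0) at_top"
  proof
    assume "((\<lambda>t. X t *\<^sub>R (1::real^1)) \<longlongrightarrow> 0) at_top"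
    from tendsto_vec_nth[OF this, of 1] assms(7) show False
      by simp
  qed
qed

lemma not_tendsto_zero_if_frequently_large:
  fixes X :: "real \<Rightarrow> real"
  assumes "0 < c" and "\<And>N. \<exists>t\<ge>N. c \<le> \<bar>X t\<bar>"
  shows "\<not> (X \<longlongrightarrow> 0) at_top"
proof
  assume "(X \<longlongrightarrow> 0) at_top"
  then obtain N where "\<And>t. N \<le> t \<Longrightarrow> \<bar>X t\<bar> < c"
    using assms(1) unfolding tendsto_iff eventually_at_top_linorder dist_real_def by force
  with assms(2)[of N] show False
    by force
qed

lemma quadratic_positive_root:
  fixes B kp ki :: real
  assumes "0 < B" and "4 * B * ki \<le> (B * kp)^2" and "ki < 0 \<or> kp < 0"
  shows "\<exists>\<mu>>0. \<mu>^2 + B * kp * \<mu> + B * ki = 0"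
proof -
  define D where "D = (B * kp)^2 - 4 * B * ki"
  have D: "0 \<le> D"
    using assms(2) unfolding D_def by simp
  have "0 < - B * kp + sqrt D"
    using assms(3)
  proof
    assume "ki < 0"
    then have "(B * kp)^2 < D"
      unfolding D_def using assms(1) by (simp add: mult_pos_neg)
    then show ?thesis
      using real_less_rsqrt by force
  next
    assume "kp < 0"
    then show ?thesis
      using mult_pos_neg[OF assms(1) \<open>kp < 0\<close>] real_sqrt_ge_zero[OF D] by linarith
  qed
  moreover have "((- B * kp + sqrt D) / 2)^2 + B * kp * ((- B * kp + sqrt D) / 2) + B * ki = 0"
    using D by (simp add: power2_eq_square field_simps D_def)
  ultimately show ?thesis
    by (intro exI[of _ "(- B * kp + sqrt D) / 2"]) simp
qed

lemma PI_counterexample_proportional: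
  assumes "0 < L" and "0 < b" and "ki = 0"
  shows "\<exists>f \<in> F_class L b. \<exists>y (x :: real \<Rightarrow> real^1). PI_solution f kp ki y x \<and> \<not> (x \<longlongrightarrow> y) at_top"
  \<comment> \<open>Without integral action an offset \<open>b kp\<close> in the plant is never corrected.\<close>
proof (rule affine_PI_counterexample[where a=0 and B=b and d="b * kp" and X="\<lambda>t. 1"
      and X'="\<lambda>t. 0" and G="\<lambda>t. t"])
  show "\<not> ((\<lambda>t::real. 1::real) \<longlongrightarrow> 0) at_top"
    by (simp add: tendsto_const_iff)
qed (use assms in \<open>auto intro!: derivative_eq_intros\<close>)

lemma PI_counterexample_exponential:
  assumes "0 < L" and "b \<le> B" and "0 < \<mu>" and "\<mu>^2 + B * kp * \<mu> + B * ki = 0"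
  shows "\<exists>f \<in> F_class L b. \<exists>y (x :: real \<Rightarrow> real^1). PI_solution f kp ki y x \<and> \<not> (x \<longlongrightarrow> y) at_top"
proof (rule affine_PI_counterexample[where a=0 and B=B and d="- B * ki / \<mu>"
      and X="\<lambda>t. exp (\<mu> * t)" and X'="\<lambda>t. \<mu> * exp (\<mu> * t)"
      and G="\<lambda>t. (exp (\<mu> * t) - 1) / \<mu>"])
  show "0 * exp (\<mu> * t) - B * (kp * exp (\<mu> * t) + ki * ((exp (\<mu> * t) - 1) / \<mu>)) + - B * ki / \<mu>
      = \<mu> * exp (\<mu> * t)" for t
  proof -
    have "(\<mu>^2 + B * kp * \<mu> + B * ki) * exp (\<mu> * t) = 0"
      using assms(4) by simp
    then show ?thesis
      using assms(3) by (simp add: field_simps power2_eq_square)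
  qed
  show "\<not> ((\<lambda>t. exp (\<mu> * t)) \<longlongrightarrow> 0) at_top"
  proof (rule not_tendsto_zero_if_frequently_large[where c=1])
    fix N :: real
    have "1 \<le> exp (\<mu> * max N 0)"
      using assms(3) by simp
    then show "\<exists>t\<ge>N. 1 \<le> \<bar>exp (\<mu> * t)\<bar>"
      by (intro exI[of _ "max N 0"]) auto
  qed simp
qed (use assms in \<open>auto intro!: derivative_eq_intros\<close>)

lemma PI_counterexample_unstable:
  assumes "0 < L" and "0 < b" and "ki < 0 \<or> kp < 0"
  shows "\<exists>f \<in> F_class L b. \<exists>y (x :: real \<Rightarrow> real^1). PI_solution f kp ki y x \<and> \<not> (x \<longlongrightarrow> y) at_top"
proof -
  define B where "B = (if ki < 0 then b else b + 4 * ki / kp^2)"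
  have B: "b \<le> B" and "0 < B"
    using assms(2,3) unfolding B_def by (auto intro!: add_pos_nonneg)
  have "4 * B * ki \<le> (B * kp)^2"
  proof (cases "ki < 0")
    case True
    then have "4 * b * ki < 0"
      using assms(2) by (simp add: mult_pos_neg)
    then show ?thesis
      unfolding B_def if_P[OF True] using zero_le_power2[of "b * kp"] by linarith
  next
    case False
    then have "(B * kp)^2 - 4 * B * ki = B * (b * kp^2)"
      using assms(3) unfolding B_def by (simp add: power2_eq_square field_simps)
    moreover have "0 \<le> B * (b * kp^2)"
      using \<open>0 < B\<close> assms(2) by simp
    ultimately show ?thesis
      by linarith
  qed
  then obtain \<mu> where "0 < \<mu>" and "\<mu>^2 + B * kp * \<mu> + B * ki = 0"
    using quadratic_positive_root[OF \<open>0 < B\<close> _ assms(3)] by blast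
  then show ?thesis
    by (rule PI_counterexample_exponential[OF assms(1) B])
qed

lemma PI_counterexample_oscillating:
  assumes "0 < L" and "0 < b" and "0 < ki" and "0 \<le> kp" and "b * kp \<le> L"
  shows "\<exists>f \<in> F_class L b. \<exists>y (x :: real \<Rightarrow> real^1). PI_solution f kp ki y x \<and> \<not> (x \<longlongrightarrow> y) at_top"
  \<comment> \<open>Pure integral action on a plant with \<open>\<partial>f/\<partial>x = b kp\<close> gives an undamped oscillation.\<close>
proof -
  define \<omega> where "\<omega> = sqrt (b * ki)"
  have \<omega>: "0 < \<omega>" and \<omega>2: "\<omega> * \<omega> = b * ki"
    unfolding \<omega>_def using assms(2,3) by simp_all
  show ?thesis
  proof (rule affine_PI_counterexample[where a="b * kp" and B=b and d=0
        and X="\<lambda>t. cos (\<omega> * t)" and X'="\<lambda>t. - \<omega> * sin (\<omega> * t)" and G="\<lambda>t. sin (\<omega> * t) / \<omega>"])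
    show "b * kp * cos (\<omega> * t) - b * (kp * cos (\<omega> * t) + ki * (sin (\<omega> * t) / \<omega>)) + 0
        = - \<omega> * sin (\<omega> * t)" for t
    proof -
      have "b * ki * sin (\<omega> * t) = \<omega> * \<omega> * sin (\<omega> * t)"
        using \<omega>2 by simp
      then show ?thesis
        using \<omega> by (simp add: field_simps)
    qed
    show "\<not> ((\<lambda>t. cos (\<omega> * t)) \<longlongrightarrow> 0) at_top"
    proof (rule not_tendsto_zero_if_frequently_large[where c=1])
      fix N :: real
      obtain n :: nat where "N * \<omega> / (2 * pi) \<le> real n"
        using real_arch_simple by blast
      then have "N \<le> 2 * real n * pi / \<omega>"
        using \<omega> by (simp add: field_simps)
      moreover have "cos (\<omega> * (2 * real n * pi / \<omega>)) = 1"
        using \<omega> by simp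
      ultimately show "\<exists>t\<ge>N. 1 \<le> \<bar>cos (\<omega> * t)\<bar>"
        by (metis order.refl abs_one)
    qed simp
  qed (use assms \<omega> in \<open>auto intro!: derivative_eq_intros\<close>)
qed

lemma PI_gains_necessary:
  fixes L b kp ki :: real
  assumes "0 < L" and "0 < b"
    and "\<forall>f \<in> F_class L b. \<forall>y (x :: real \<Rightarrow> real^1). PI_solution f kp ki y x \<longrightarrow> (x \<longlongrightarrow> y) at_top"
  shows "(kp, ki) \<in> Omega_pi' L b"
proof (rule ccontr)
  assume "(kp, ki) \<notin> Omega_pi' L b"
  then consider "ki = 0" | "ki < 0 \<or> kp < 0" | "0 < ki" "0 \<le> kp" "b * kp \<le> L"
    unfolding Omega_pi'_def by (force simp: mult.commute)
  then have "\<exists>f \<in> F_class L b. \<exists>y (x :: real \<Rightarrow> real^1). PI_solution f kp ki y x \<and> \<not> (x \<longlongrightarrow> y) at_top"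
  proof cases
    case 1
    then show ?thesis
      by (rule PI_counterexample_proportional[OF assms(1,2)])
  next
    case 2
    then show ?thesis
      by (rule PI_counterexample_unstable[OF assms(1,2)])
  next
    case 3
    then show ?thesis
      by (rule PI_counterexample_oscillating[OF assms(1,2)])
  qed
  with assms(3) show False
    by blast
qed

theorem theorem3p3:
  fixes L b :: real
  assumes "L > 0" and "b > 0"
  shows "(\<forall>kp ki. (kp, ki) \<in> Omega_pi L b \<longrightarrow>
            (\<forall>(f :: real^'n \<Rightarrow> real^'n \<Rightarrow> real^'n) \<in> F_class L b. \<forall>y x.
               PI_solution f kp ki y x \<longrightarrow> (x \<longlongrightarrow> y) at_top))
       \<and> (\<forall>kp ki. (kp, ki) \<in> Omega_pi' L b \<longrightarrow>
            (\<forall>(f :: real^1 \<Rightarrow> real^1 \<Rightarrow> real^1) \<in> F_class L b. \<forall>y x.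
               PI_solution f kp ki y x \<longrightarrow> (x \<longlongrightarrow> y) at_top))
       \<and> (\<forall>kp ki.
            (\<forall>(f :: real^1 \<Rightarrow> real^1 \<Rightarrow> real^1) \<in> F_class L b. \<forall>y x.
               PI_solution f kp ki y x \<longrightarrow> (x \<longlongrightarrow> y) at_top)
            \<longrightarrow> (kp, ki) \<in> Omega_pi' L b)"
  using PI_solution_tendsto_setpoint[OF assms] PI_solution_tendsto_setpoint_scalar[OF assms]
    PI_gains_necessary[OF assms]
  by blast

end
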